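(* Let $\alpha_{2,3} := \sum_{m=1}^{\infty} \frac{1}{3^m 2^{3^m}}$ (the Stoneham number). Then the sequence $(\{2^n \alpha_{2,3}\})_{n \in \mathbb{N}}$ does not have Poissonian pair correlations.
   Context: $\{x\}$ denotes the fractional part of $x$ and $\|x\|$ the distance from $x$ to the nearest integer. A sequence $(x_n)_{n\in\mathbb{N}}$ in $[0,1)$ has Poissonian pair correlations if for every $s \geq 0$, $F_N(s) := \frac{1}{N}\#\{1 \leq l \neq m \leq N : \|x_l - x_m\| \leq s/N\} \to 2s$ as $N\to\infty$. *)

theory Defs
  imports "HOL-Analysis.Analysis"
begin

definition dist_int :: "real \<Rightarrow> real" where
  "dist_int x = min (frac x) (1 - frac x)"

definition pair_corr :: "(nat \<Rightarrow> real) \<Rightarrow> nat \<Rightarrow> real \<Rightarrow> real" where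
  "pair_corr x N s = real (card {(l, m). l \<in> {1..N} \<and> m \<in> {1..N} \<and> l \<noteq> m \<and>
      dist_int (x l - x m) \<le> s / real N}) / real N"

definition poissonian_pair_correlations :: "(nat \<Rightarrow> real) \<Rightarrow> bool" where
  "poissonian_pair_correlations x \<longleftrightarrow>
     (\<forall>s::real. s \<ge> 0 \<longrightarrow> (\<lambda>N. pair_corr x N s) \<longlonglongrightarrow> 2 * s)"

definition stoneham_2_3 :: real where
  "stoneham_2_3 = (\<Sum>m. 1 / (3 ^ (m + 1) * 2 ^ (3 ^ (m + 1))))"

end

theory Submission
  imports Defs "HOL-Number_Theory.Cong"
begin

(* The m-th term of the Stoneham number has denominator 3^m 2^(3^m), and 2^(2*3^K) = 1
   modulo 3^(K+1). Hence for N = 3^(K+2), all n in a window of length N/3 and the shift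
   d = 2*3^K, the points 2^(n+d) alpha and 2^n alpha agree modulo 1 up to the tail of the
   series, which is far below 1/(8N). So F_N(1/8) >= 1/3 for these N, whereas Poissonian
   pair correlations would force F_N(1/8) -> 1/4. *)

lemma dist_int_le_of_diff_Ints:
  assumes "y - \<delta> \<in> \<int>" "0 \<le> \<delta>" "\<delta> < 1"
  shows "dist_int y \<le> \<delta>"
proof -
  have "frac y = \<delta>"
    using assms by (simp add: frac_unique_iff)
  then show ?thesis
    by (simp add: dist_int_def)
qed

lemma dist_int_frac_diff: "dist_int (frac a - frac b) = dist_int (a - b)"
proof -
  have "frac a - frac b = (a - b) + of_int (\<lfloor>b\<rfloor> - \<lfloor>a\<rfloor>)"
    by (simp add: frac_def)
  then show ?thesis
    by (simp only: dist_int_def frac_add_of_int_right)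
qed

lemma pair_corr_ge_card_shift_pairs:
  assumes "0 < d" "1 \<le> a" "b + d \<le> N"
    and "\<And>n. n \<in> {a..b} \<Longrightarrow> dist_int (x (n + d) - x n) \<le> s / real N"
  shows "real (card {a..b}) / real N \<le> pair_corr x N s"
proof -
  define P where "P = {(l, m). l \<in> {1..N} \<and> m \<in> {1..N} \<and> l \<noteq> m \<and>
      dist_int (x l - x m) \<le> s / real N}"
  have "(\<lambda>n. (n + d, n)) ` {a..b} \<subseteq> P"
    using assms by (auto simp: P_def)
  moreover have "finite P"
    by (rule finite_subset[of _ "{1..N} \<times> {1..N}"]) (auto simp: P_def)
  moreover have "inj_on (\<lambda>n. (n + d, n)) {a..b}"
    by (rule inj_onI) auto
  ultimately have "card {a..b} \<le> card P"
    by (metis card_image card_mono)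
  then show ?thesis
    unfolding pair_corr_def P_def[symmetric] by (intro divide_right_mono) auto
qed

lemma power_prime_power_minus_one_dvd:
  fixes a :: int and p :: nat
  assumes "int p dvd a - 1"
  shows "int p ^ (k + 1) dvd a ^ (p ^ k) - 1"
proof (induction k)
  case 0
  then show ?case using assms by simp
next
  case (Suc k)
  define b where "b = a ^ (p ^ k)"
  have "[b = 1] (mod int p)"
    using Suc.IH dvd_trans[of "int p" "int p ^ (k + 1)"] by (simp add: b_def cong_iff_dvd_diff)
  then have "[(\<Sum>i<p. b ^ i) = (\<Sum>i<p. 1)] (mod int p)"
    by (intro cong_sum) (metis cong_pow power_one)
  then have "int p dvd (\<Sum>i<p. b ^ i)"
    by (simp add: cong_0_iff cong_dvd_iff)
  then have "int p ^ (k + 1) * int p dvd (b - 1) * (\<Sum>i<p. b ^ i)"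
    using Suc.IH by (simp add: b_def mult_dvd_mono)
  moreover have "a ^ (p ^ Suc k) = b ^ p"
    by (simp add: b_def power_mult[symmetric] mult.commute)
  ultimately show ?case
    by (simp add: power_diff_1_eq mult_ac)
qed

lemma three_pow_dvd_two_pow_minus_one:
  assumes "j \<le> K"
  shows "(3::int) ^ (j + 1) dvd 2 ^ (2 * 3 ^ K) - 1"
proof -
  have "(3::int) ^ (j + 1) dvd 3 ^ (K + 1)"
    using assms by (simp add: le_imp_power_dvd)
  moreover have "(3::int) ^ (K + 1) dvd 4 ^ (3 ^ K) - 1"
    using power_prime_power_minus_one_dvd[of 3 4 K] by simp
  moreover have "(4::int) ^ (3 ^ K) = 2 ^ (2 * 3 ^ K)"
    by (simp add: power_mult)
  ultimately show ?thesis
    using dvd_trans by metis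
qed

definition stoneham_term :: "nat \<Rightarrow> real" where
  "stoneham_term j = 1 / (3 ^ (j + 1) * 2 ^ (3 ^ (j + 1)))"

lemma stoneham_2_3_eq_suminf: "stoneham_2_3 = (\<Sum>j. stoneham_term j)"
  by (simp add: stoneham_2_3_def stoneham_term_def)

lemma stoneham_term_nonneg: "0 \<le> stoneham_term j"
  by (simp add: stoneham_term_def)

lemma three_pow_add_ge: "3 ^ k + j \<le> (3::nat) ^ (k + j)"
proof (induction j)
  case (Suc j)
  then show ?case
    using one_le_power[of "3::nat" "k + j"] by (simp; linarith)
qed simp

lemma stoneham_term_shift_le: "stoneham_term (j + k) \<le> (1/2) ^ (3 ^ (k + 1)) * (1/2) ^ j"
proof -
  have "stoneham_term (j + k) \<le> 1 / 2 ^ (3 ^ (j + k + 1))"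
    unfolding stoneham_term_def
    using mult_right_mono[OF one_le_power[of "3::real" "j + k + 1"], of "2 ^ (3 ^ (j + k + 1))"]
    by (intro divide_left_mono) auto
  also have "\<dots> = (1/2) ^ (3 ^ (k + 1 + j))"
    by (simp add: power_one_over ac_simps)
  also have "\<dots> \<le> (1/2) ^ (3 ^ (k + 1) + j)"
    by (intro power_decreasing three_pow_add_ge) auto
  finally show ?thesis
    by (simp add: power_add)
qed

lemma summable_stoneham_term_shift: "summable (\<lambda>j. stoneham_term (j + k))"
proof (rule summable_comparison_test')
  show "summable (\<lambda>j. (1/2) ^ (3 ^ (k + 1)) * (1/2::real) ^ j)"
    by (intro summable_mult summable_geometric) auto
  show "norm (stoneham_term (j + k)) \<le> (1/2) ^ (3 ^ (k + 1)) * (1/2) ^ j" for j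
    using stoneham_term_shift_le stoneham_term_nonneg by simp
qed

lemma stoneham_tail_le: "(\<Sum>j. stoneham_term (j + k)) \<le> 2 * (1/2) ^ (3 ^ (k + 1))"
proof -
  have "(\<Sum>j. stoneham_term (j + k)) \<le> (\<Sum>j. (1/2) ^ (3 ^ (k + 1)) * (1/2::real) ^ j)"
    by (intro suminf_le stoneham_term_shift_le summable_stoneham_term_shift
        summable_mult summable_geometric) auto
  also have "\<dots> = (1/2) ^ (3 ^ (k + 1)) * 2"
    by (subst suminf_mult) (auto simp: suminf_geometric)
  finally show ?thesis
    by simp
qed

lemma stoneham_term_times_multiple_Ints:
  assumes "3 ^ (j + 1) \<le> n" "(3::int) ^ (j + 1) dvd m"
  shows "2 ^ n * of_int m * stoneham_term j \<in> \<int>"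
proof -
  define e :: nat where "e = 3 ^ (j + 1)"
  obtain c where c: "of_int m = (3::real) ^ (j + 1) * of_int c"
    using assms(2) by fastforce
  have "(2::real) ^ n = 2 ^ (n - e) * 2 ^ e"
    using assms(1) by (simp add: e_def power_add[symmetric])
  moreover have "stoneham_term j = 1 / (3 ^ (j + 1) * 2 ^ e)"
    by (simp add: stoneham_term_def e_def)
  ultimately have "2 ^ n * of_int m * stoneham_term j = 2 ^ (n - e) * of_int c"
    by (simp add: c)
  then show ?thesis
    by simp
qed

(* Since 2^(2*3^K) = 1 mod 3^(K+1), shifting n by 2*3^K changes the first K + 1 terms of
   2^n * stoneham_2_3 only by integers; all that moves modulo 1 is the doubly exponentially
   small tail. *)
lemma stoneham_shift_diff:
  assumes "3 ^ (K + 1) \<le> n"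
  obtains \<delta> where
    "2 ^ (n + 2 * 3 ^ K) * stoneham_2_3 - 2 ^ n * stoneham_2_3 - \<delta> \<in> \<int>"
    "0 \<le> \<delta>" "\<delta> \<le> 2 ^ (n + 2 * 3 ^ K + 1) * (1/2) ^ (3 ^ (K + 2))"
proof
  define m :: int where "m = 2 ^ (2 * 3 ^ K) - 1"
  define T where "T = (\<Sum>j. stoneham_term (j + (K + 1)))"
  have split: "stoneham_2_3 = T + (\<Sum>j<K + 1. stoneham_term j)"
    unfolding stoneham_2_3_eq_suminf T_def
    by (rule suminf_split_initial_segment) (use summable_stoneham_term_shift[of 0] in simp)
  have T_nonneg: "0 \<le> T"
    unfolding T_def by (intro suminf_nonneg summable_stoneham_term_shift stoneham_term_nonneg)
  have shift: "2 ^ (n + 2 * 3 ^ K) * y - 2 ^ n * y = 2 ^ n * of_int m * y" for y :: real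
    by (simp add: m_def power_add algebra_simps)
  have "2 ^ (n + 2 * 3 ^ K) * stoneham_2_3 - 2 ^ n * stoneham_2_3 - 2 ^ n * of_int m * T
      = 2 ^ n * of_int m * (\<Sum>j<K + 1. stoneham_term j)"
    unfolding shift split by (simp add: algebra_simps)
  also have "\<dots> = (\<Sum>j<K + 1. 2 ^ n * of_int m * stoneham_term j)"
    by (rule sum_distrib_left)
  also have "\<dots> \<in> \<int>"
  proof (rule Ints_sum)
    fix j
    assume "j \<in> {..<K + 1}"
    then have "j \<le> K"
      by simp
    then have "3 ^ (j + 1) \<le> (3::nat) ^ (K + 1)"
      by (intro power_increasing) auto
    with assms have "3 ^ (j + 1) \<le> n"
      by linarith
    then show "2 ^ n * of_int m * stoneham_term j \<in> \<int>"
      by (rule stoneham_term_times_multiple_Ints)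
        (use three_pow_dvd_two_pow_minus_one[OF \<open>j \<le> K\<close>] in \<open>simp add: m_def\<close>)
  qed
  finally show "2 ^ (n + 2 * 3 ^ K) * stoneham_2_3 - 2 ^ n * stoneham_2_3 - 2 ^ n * of_int m * T \<in> \<int>" .
  show "0 \<le> 2 ^ n * of_int m * T"
    using T_nonneg by (simp add: m_def)
  have "2 ^ n * of_int m * T \<le> 2 ^ (n + 2 * 3 ^ K) * T"
    using T_nonneg by (simp add: m_def power_add algebra_simps)
  also have "\<dots> \<le> 2 ^ (n + 2 * 3 ^ K) * (2 * (1/2) ^ (3 ^ (K + 2)))"
    using stoneham_tail_le[of "K + 1"] by (simp add: T_def)
  finally show "2 ^ n * of_int m * T \<le> 2 ^ (n + 2 * 3 ^ K + 1) * (1/2) ^ (3 ^ (K + 2))"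
    by simp
qed

lemma stoneham_pair_close:
  assumes "3 ^ (K + 1) \<le> n" "n + 2 * 3 ^ K + 2 * K + 8 \<le> 3 ^ (K + 2)"
  shows "dist_int (frac (2 ^ (n + 2 * 3 ^ K) * stoneham_2_3) - frac (2 ^ n * stoneham_2_3))
    \<le> (1/8) / 3 ^ (K + 2)"
proof -
  define N :: nat where "N = 3 ^ (K + 2)"
  define e where "e = n + 2 * 3 ^ K + 1"
  obtain \<delta> where diff: "2 ^ (n + 2 * 3 ^ K) * stoneham_2_3 - 2 ^ n * stoneham_2_3 - \<delta> \<in> \<int>"
    and "0 \<le> \<delta>" and "\<delta> \<le> 2 ^ e * (1/2) ^ N"
    using stoneham_shift_diff[OF assms(1)] by (metis N_def e_def)
  have "e + (2 * K + 7) \<le> N"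
    using assms(2) by (simp add: e_def N_def)
  then have "2 ^ e * (1/2::real) ^ N \<le> 2 ^ e * (1/2) ^ (e + (2 * K + 7))"
    by (intro mult_left_mono power_decreasing) auto
  also have "\<dots> = (1/2) ^ (2 * K + 7)"
    by (simp add: power_add power_one_over)
  also have "\<dots> = 1 / (128 * 4 ^ K)"
    by (simp add: power_add power_mult power_one_over)
  also have "\<dots> \<le> 1 / (72 * 3 ^ K)"
  proof -
    have "(3::real) ^ K \<le> 4 ^ K"
      by (rule power_mono) auto
    then have "72 * (3::real) ^ K \<le> 128 * 4 ^ K"
      using zero_le_power[of "3::real" K] by linarith
    then show ?thesis
      by (rule divide_left_mono) auto
  qed
  also have "\<dots> = (1/8) / 3 ^ (K + 2)"
    by simp
  finally have small: "\<delta> \<le> (1/8) / 3 ^ (K + 2)"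
    using \<open>\<delta> \<le> 2 ^ e * (1/2) ^ N\<close> by linarith
  moreover have "(1/8::real) / 3 ^ (K + 2) \<le> 1/8"
    using one_le_power[of "3::real" "K + 2"] by (simp add: divide_le_eq)
  ultimately have "\<delta> < 1"
    by linarith
  with diff \<open>0 \<le> \<delta>\<close>
  have "dist_int (2 ^ (n + 2 * 3 ^ K) * stoneham_2_3 - 2 ^ n * stoneham_2_3) \<le> \<delta>"
    by (rule dist_int_le_of_diff_Ints)
  then show ?thesis
    using small by (simp add: dist_int_frac_diff)
qed

lemma three_pow_ge_linear: "3 \<le> K \<Longrightarrow> 2 * K + 7 \<le> (3::nat) ^ K"
  by (induction K rule: dec_induct) simp_all

lemma stoneham_pair_corr_ge:
  assumes "3 \<le> K"
  shows "1/3 \<le> pair_corr (\<lambda>n. frac (2 ^ n * stoneham_2_3)) (3 ^ (K + 2)) (1/8)"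
proof -
  define a :: nat where "a = 3 ^ (K + 1)"
  define b :: nat where "b = 3 ^ (K + 2) - 2 * 3 ^ K - 2 * K - 8"
  have linear: "2 * K + 7 \<le> 3 ^ K"
    using three_pow_ge_linear[OF assms] .
  have count: "3 * 3 ^ K \<le> card {a..b}"
    using linear by (simp add: a_def b_def)
  have "1/3 = real (3 * 3 ^ K) / real (3 ^ (K + 2))"
    by simp
  also have "\<dots> \<le> real (card {a..b}) / real (3 ^ (K + 2))"
    by (intro divide_right_mono of_nat_mono count) simp
  also have "\<dots> \<le> pair_corr (\<lambda>n. frac (2 ^ n * stoneham_2_3)) (3 ^ (K + 2)) (1/8)"
  proof (rule pair_corr_ge_card_shift_pairs)
    fix n
    assume "n \<in> {a..b}"
    then have "3 ^ (K + 1) \<le> n" "n + 2 * 3 ^ K + 2 * K + 8 \<le> 3 ^ (K + 2)"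
      using linear by (auto simp: a_def b_def)
    from stoneham_pair_close[OF this]
    show "dist_int (frac (2 ^ (n + 2 * 3 ^ K) * stoneham_2_3) - frac (2 ^ n * stoneham_2_3))
        \<le> (1/8) / real (3 ^ (K + 2))"
      by simp
  qed (use linear in \<open>auto simp: a_def b_def\<close>)
  finally show ?thesis .
qed

theorem theorem3:
  shows "\<not> poissonian_pair_correlations (\<lambda>n. frac (2 ^ n * stoneham_2_3))"
proof
  define F where "F N = pair_corr (\<lambda>n. frac (2 ^ n * stoneham_2_3)) N (1/8)" for N
  assume "poissonian_pair_correlations (\<lambda>n. frac (2 ^ n * stoneham_2_3))"
  then have "F \<longlonglongrightarrow> 2 * (1/8)"
    unfolding poissonian_pair_correlations_def F_def by (auto dest: spec[of _ "1/8"])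
  moreover have "strict_mono (\<lambda>K. 3 ^ (K + 5) :: nat)"
    by (rule strict_monoI) simp
  ultimately have "(\<lambda>K. F (3 ^ (K + 5))) \<longlonglongrightarrow> 2 * (1/8)"
    using LIMSEQ_subseq_LIMSEQ by (auto simp: comp_def)
  moreover have "1/3 \<le> F (3 ^ (K + 5))" for K
    using stoneham_pair_corr_ge[of "K + 3"] by (simp add: F_def ac_simps)
  ultimately have "1/3 \<le> 2 * (1/8::real)"
    using LIMSEQ_le_const by blast
  then show False
    by simp
qed

end
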